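(* Let $m_1 > m_2 \ge 2$ be integers and let $G_j$ be a first kind of ideal center graph (defined in the context) with center vertex $v_j$, consisting of a clique $K$ of size $m_1$ and a clique $K'$ of size $m_2$ with $K \cap K' = \{v_j\}$ and no edges between $K\setminus\{v_j\}$ and $K'\setminus\{v_j\}$, so that $K$ is the (unique) maximum clique of $G_j$. Let $A$ be the adjacency matrix of $G_j$, $\lambda_1$ its largest eigenvalue with eigenvector $|\lambda_1\rangle$, and for a vertex $v_l$ let $p_{l,1} = \langle l|\lambda_1\rangle\langle\lambda_1|j\rangle$. If $v_l$ is a member of the maximum clique $K$ and $v_k$ is not a member of the maximum clique, then \[ p_{l,1} > p_{k,1}, \] i.e. (for $v_l \neq v_j$) $\left|\frac{1}{m_1-2-\lambda_1}\right| > \left|\frac{1}{m_2-2-\lambda_1}\right|$.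
   Context: A graph $G_j$ is a center graph with center vertex $v_j$ if $v_j$ is adjacent to all other vertices. A first kind of ideal center graph is a center graph $G_j$ whose vertex set is the union of two cliques, both containing the center vertex $v_j$, such that no edge joins a vertex of one clique (other than $v_j$) to a vertex of the other clique; $m_1$ denotes the size of the larger (maximum) clique and $m_2$ the size of the other clique. The continuous time quantum walk on a graph with adjacency matrix $A$ (vertices $v_1,\dots,v_N$ identified with an orthonormal basis $|1\rangle,\dots,|N\rangle$) has transition amplitude $\alpha_{l,j}(t) = \langle l|e^{iAt}|j\rangle = \sum_n e^{i\lambda_n t}\langle l|\lambda_n\rangle\langle\lambda_n|j\rangle$, where $\lambda_1\ge\lambda_2\ge\dots\ge\lambda_N$ are the eigenvalues of $A$ with orthonormal eigenvectors $|\lambda_n\rangle$; $p_{l,n} = \langle l|\lambda_n\rangle\langle\lambda_n|j\rangle$ is the intensity (coefficient) of the frequency $\lambda_n$ in $\alpha_{l,j}$. *)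

theory Defs
  imports "HOL-Analysis.Analysis"
begin

definition simple_graph :: "('n \<Rightarrow> 'n \<Rightarrow> bool) \<Rightarrow> bool" where
  "simple_graph E \<longleftrightarrow> (\<forall>x y. E x y \<longrightarrow> E y x) \<and> (\<forall>x. \<not> E x x)"

definition adj_matrix :: "('n::finite \<Rightarrow> 'n \<Rightarrow> bool) \<Rightarrow> real^'n^'n" where
  "adj_matrix E = (\<chi> i k. if E i k then 1 else 0)"

definition is_clique :: "('n \<Rightarrow> 'n \<Rightarrow> bool) \<Rightarrow> 'n set \<Rightarrow> bool" where
  "is_clique E S \<longleftrightarrow> (\<forall>x\<in>S. \<forall>y\<in>S. x \<noteq> y \<longrightarrow> E x y)"

definition center_graph :: "('n \<Rightarrow> 'n \<Rightarrow> bool) \<Rightarrow> 'n \<Rightarrow> bool" where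
  "center_graph E j \<longleftrightarrow> (\<forall>x. x \<noteq> j \<longrightarrow> E j x)"

definition first_kind_ideal_center_graph ::
  "('n \<Rightarrow> 'n \<Rightarrow> bool) \<Rightarrow> 'n \<Rightarrow> 'n set \<Rightarrow> 'n set \<Rightarrow> bool" where
  "first_kind_ideal_center_graph E j K K' \<longleftrightarrow>
     simple_graph E \<and> center_graph E j \<and>
     is_clique E K \<and> is_clique E K' \<and> j \<in> K \<and> j \<in> K' \<and>
     K \<union> K' = UNIV \<and> K \<inter> K' = {j} \<and>
     (\<forall>x\<in>K - {j}. \<forall>y\<in>K' - {j}. \<not> E x y)"

definition is_eigenvalue :: "real^'n^'n \<Rightarrow> real \<Rightarrow> bool" where
  "is_eigenvalue A \<mu> \<longleftrightarrow> (\<exists>x. x \<noteq> 0 \<and> A *v x = \<mu> *\<^sub>R x)"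

end

theory Submission
  imports Defs
begin

text \<open>On an eigenvector of eigenvalue \<mu> \<noteq> -1, the row equation of a vertex i of K - {j} reads
  (\<mu> + 1) v i = sum of v over K, so v is constant, say x, on K - {j}; summing then gives
  (\<mu> - m1 + 2) x = v j, and likewise (\<mu> - m2 + 2) y = v j on K' - {j}. Eliminating x and y
  shows that the eigenvalues with v j \<noteq> 0 are the roots of a cubic, which by the intermediate
  value theorem has a root above m1 - 2. Hence \<lambda>1 > m1 - 2, so T = \<lambda>1 - m1 + 2 and
  S = \<lambda>1 - m2 + 2 satisfy 0 < T < S and 1 < S. Then v is v j / T on K - {j} and v j / S off K,
  so v j \<noteq> 0, and v l v j, which is v j^2 or v j^2 / T, exceeds v k v j = v j^2 / S.\<close>

lemma first_kind_ideal_center_graph_sym: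
  "first_kind_ideal_center_graph E j K K' \<Longrightarrow> first_kind_ideal_center_graph E j K' K"
  unfolding first_kind_ideal_center_graph_def simple_graph_def by blast

lemma first_kind_ideal_center_graph_adj_iff:
  assumes G: "first_kind_ideal_center_graph E j K K'"
  shows "E x y \<longleftrightarrow> x \<noteq> y \<and> (x \<in> K \<and> y \<in> K \<or> x \<in> K' \<and> y \<in> K')"
proof
  assume "E x y"
  with G show "x \<noteq> y \<and> (x \<in> K \<and> y \<in> K \<or> x \<in> K' \<and> y \<in> K')"
    unfolding first_kind_ideal_center_graph_def simple_graph_def by blast
next
  assume "x \<noteq> y \<and> (x \<in> K \<and> y \<in> K \<or> x \<in> K' \<and> y \<in> K')"
  with G show "E x y"
    unfolding first_kind_ideal_center_graph_def is_clique_def by blast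
qed

lemma adj_matrix_mult_nth:
  fixes E :: "'n::finite \<Rightarrow> 'n \<Rightarrow> bool"
  shows "(adj_matrix E *v w) $ i = (\<Sum>y | E i y. w $ y)"
proof -
  have "(adj_matrix E *v w) $ i = (\<Sum>y\<in>UNIV. if E i y then w $ y else 0)"
    unfolding adj_matrix_def matrix_vector_mult_def by (simp, intro sum.cong) auto
  also have "\<dots> = (\<Sum>y | E i y. w $ y)"
    by (simp add: sum.If_cases)
  finally show ?thesis .
qed

lemma sum_remove_const:
  fixes f :: "'a \<Rightarrow> 'b::ring_1"
  assumes "finite K" "j \<in> K" "\<And>i. i \<in> K - {j} \<Longrightarrow> f i = c"
  shows "sum f K = f j + (of_nat (card K) - 1) * c"
proof -
  have "0 < card K"
    using assms(1,2) card_gt_0_iff by blast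
  have "sum f K = f j + sum f (K - {j})"
    using assms(1,2) by (simp add: sum.remove)
  also have "sum f (K - {j}) = of_nat (card (K - {j})) * c"
    using assms(3) by simp
  also have "of_nat (card (K - {j})) = (of_nat (card K) - 1 :: 'b)"
    using \<open>0 < card K\<close> assms(2) by (simp add: of_nat_diff)
  finally show ?thesis .
qed

lemma ideal_center_graph_mult_nth_clique:
  fixes E :: "'n::finite \<Rightarrow> 'n \<Rightarrow> bool"
  assumes G: "first_kind_ideal_center_graph E j K K'" and i: "i \<in> K - {j}"
  shows "(adj_matrix E *v w) $ i = sum (($) w) K - w $ i"
proof -
  have "K \<inter> K' = {j}"
    using G unfolding first_kind_ideal_center_graph_def by blast
  then have "{y. E i y} = K - {i}"
    using first_kind_ideal_center_graph_adj_iff[OF G] i by blast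
  then show ?thesis
    using i by (simp add: adj_matrix_mult_nth sum_diff1)
qed

lemma ideal_center_graph_mult_nth_center:
  fixes E :: "'n::finite \<Rightarrow> 'n \<Rightarrow> bool"
  assumes G: "first_kind_ideal_center_graph E j K K'"
  shows "(adj_matrix E *v w) $ j = sum (($) w) K + sum (($) w) K' - 2 * w $ j"
proof -
  have KK': "K \<inter> K' = {j}" "K \<union> K' = UNIV"
    using G unfolding first_kind_ideal_center_graph_def by blast+
  then have "{y. E j y} = (K - {j}) \<union> (K' - {j})"
    using first_kind_ideal_center_graph_adj_iff[OF G] by blast
  moreover have "(K - {j}) \<inter> (K' - {j}) = {}"
    using KK' by blast
  ultimately have "(adj_matrix E *v w) $ j = sum (($) w) (K - {j}) + sum (($) w) (K' - {j})"
    by (simp add: adj_matrix_mult_nth sum.union_disjoint)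
  moreover have "j \<in> K" "j \<in> K'"
    using KK' by blast+
  ultimately show ?thesis
    by (simp add: sum_diff1)
qed

lemma ideal_center_graph_eigenvector_clique_nth:
  fixes E :: "'n::finite \<Rightarrow> 'n \<Rightarrow> bool"
  assumes G: "first_kind_ideal_center_graph E j K K'"
    and eig: "adj_matrix E *v v = \<mu> *\<^sub>R v" and \<mu>: "\<mu> \<noteq> -1" and i: "i \<in> K - {j}"
  shows "(\<mu> - real (card K) + 2) * v $ i = v $ j"
proof -
  have row: "(\<mu> + 1) * v $ i' = sum (($) v) K" if "i' \<in> K - {j}" for i'
    using ideal_center_graph_mult_nth_clique[OF G that, of v] eig
    by (simp add: algebra_simps)
  have "\<mu> + 1 \<noteq> 0"
    using \<mu> by simp
  then have const: "v $ i' = v $ i" if "i' \<in> K - {j}" for i'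
    using row[OF that] row[OF i] by (metis mult_left_cancel)
  have "sum (($) v) K = v $ j + (real (card K) - 1) * v $ i"
    using G const by (intro sum_remove_const) (auto simp: first_kind_ideal_center_graph_def)
  with row[OF i] show ?thesis
    by (simp add: algebra_simps)
qed

lemma cubic_root_above:
  fixes a b :: real
  assumes "b < a" "1 \<le> b"
  shows "\<exists>r > a - 2. r * (r - a + 2) * (r - b + 2) = (a - 1) * (r - b + 2) + (b - 1) * (r - a + 2)"
proof -
  define p where "p = (\<lambda>r. r * (r - a + 2) * (r - b + 2) - (a - 1) * (r - b + 2) - (b - 1) * (r - a + 2))"
  have "p (a - 2) = - (a - 1) * (a - b)"
    unfolding p_def by (simp add: algebra_simps)
  with assms have neg: "p (a - 2) < 0"
    by (simp add: mult_neg_pos)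
  have "0 < (a + b) * (a + 2)"
    using assms by (intro mult_pos_pos) auto
  have "(a - 1) * (a + 2) + (b - 1) * (b + 2) \<le> (a + b) * (a + 2)"
    using assms by (simp add: algebra_simps) (smt (verit) mult_left_mono mult_right_mono)
  also have "\<dots> \<le> (a + b) * (a + 2) * (b + 2)"
    using mult_left_mono[of 1 "b + 2" "(a + b) * (a + 2)"] \<open>0 < (a + b) * (a + 2)\<close> assms
    by simp
  finally have pos: "0 \<le> p (a + b)"
    unfolding p_def by (simp add: algebra_simps)
  obtain r where r: "a - 2 \<le> r" "p r = 0"
    using IVT[of p "a - 2" 0 "a + b"] neg pos assms unfolding p_def
    by (force intro!: continuous_intros)
  moreover have "r \<noteq> a - 2"
    using r neg by auto
  ultimately show ?thesis
    unfolding p_def by (intro exI[of _ r]) auto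
qed

lemma ideal_center_graph_eigenvalue_gt:
  fixes E :: "'n::finite \<Rightarrow> 'n \<Rightarrow> bool"
  assumes G: "first_kind_ideal_center_graph E j K K'" and card: "card K' < card K"
  shows "\<exists>r > real (card K) - 2. is_eigenvalue (adj_matrix E) r"
proof -
  define a b where "a = real (card K)" and "b = real (card K')"
  have G': "first_kind_ideal_center_graph E j K' K"
    using G by (rule first_kind_ideal_center_graph_sym)
  have jK: "j \<in> K" "j \<in> K'" and KK': "K \<inter> K' = {j}"
    using G unfolding first_kind_ideal_center_graph_def by blast+
  have "0 < card K'"
    using jK by (auto simp: card_gt_0_iff)
  then have "1 \<le> b"
    unfolding b_def by linarith
  then obtain r where r: "r > a - 2"
    and cubic: "r * (r - a + 2) * (r - b + 2) = (a - 1) * (r - b + 2) + (b - 1) * (r - a + 2)"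
    using cubic_root_above[of b a] card unfolding a_def b_def by auto
  define t s where "t = r - a + 2" and "s = r - b + 2"
  have ts: "0 < t" "0 < s"
    using r card unfolding t_def s_def a_def b_def by auto
  have cubic_ts: "r * t * s = (a - 1) * s + (b - 1) * t"
    using cubic unfolding t_def s_def .
  define w :: "real^'n" where "w = (\<chi> i. if i = j then 1 else if i \<in> K then 1 / t else 1 / s)"
  have w_center: "w $ j = 1"
    and w_clique: "\<And>i. i \<in> K - {j} \<Longrightarrow> w $ i = 1 / t"
    and w_clique': "\<And>i. i \<in> K' - {j} \<Longrightarrow> w $ i = 1 / s"
    using KK' by (auto simp: w_def)
  have sumK: "sum (($) w) K = 1 + (a - 1) / t"
    using jK w_clique by (subst sum_remove_const[where c = "1 / t"]) (auto simp: w_center a_def)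
  have sumK': "sum (($) w) K' = 1 + (b - 1) / s"
    using jK w_clique' by (subst sum_remove_const[where c = "1 / s"]) (auto simp: w_center b_def)
  have "(adj_matrix E *v w) $ i = r * w $ i" for i
  proof -
    consider "i = j" | "i \<in> K - {j}" | "i \<in> K' - {j}"
      using G unfolding first_kind_ideal_center_graph_def by blast
    then show ?thesis
    proof cases
      case 1
      have "(a - 1) / t + (b - 1) / s = r"
        using cubic_ts ts by (simp add: field_simps)
      with 1 show ?thesis
        by (simp add: ideal_center_graph_mult_nth_center[OF G] sumK sumK' w_center)
    next
      case 2
      have "1 + (a - 1) / t - 1 / t = (t + a - 2) / t"
        using ts by (simp add: field_simps)
      also have "t + a - 2 = r"
        unfolding t_def by simp
      finally have "1 + (a - 1) / t - 1 / t = r / t" .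
      with 2 show ?thesis
        by (simp add: ideal_center_graph_mult_nth_clique[OF G 2] sumK w_clique)
    next
      case 3
      have "1 + (b - 1) / s - 1 / s = (s + b - 2) / s"
        using ts by (simp add: field_simps)
      also have "s + b - 2 = r"
        unfolding s_def by simp
      finally have "1 + (b - 1) / s - 1 / s = r / s" .
      with 3 show ?thesis
        by (simp add: ideal_center_graph_mult_nth_clique[OF G' 3] sumK' w_clique')
    qed
  qed
  then have "adj_matrix E *v w = r *\<^sub>R w"
    by (simp add: vec_eq_iff)
  moreover have "w \<noteq> 0"
    using w_center by (metis zero_index zero_neq_one)
  ultimately have "is_eigenvalue (adj_matrix E) r"
    unfolding is_eigenvalue_def by blast
  with r show ?thesis
    unfolding a_def by blast
qed

lemma ideal_center_graph_eigenvector_clique_dominates: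
  fixes E :: "'n::finite \<Rightarrow> 'n \<Rightarrow> bool"
  assumes G: "first_kind_ideal_center_graph E j K K'" and card: "card K' < card K"
    and eig: "adj_matrix E *v v = \<mu> *\<^sub>R v" and "v \<noteq> 0" and \<mu>: "\<mu> > real (card K) - 2"
    and l: "l \<in> K" and k: "k \<notin> K"
  shows "v $ k * v $ j < v $ l * v $ j"
proof -
  define T S where "T = \<mu> - card K + 2" and "S = \<mu> - card K' + 2"
  have TS: "0 < T" "T < S" "1 < S" and "\<mu> \<noteq> -1"
    using \<mu> card unfolding T_def S_def by auto
  have entry_K: "v $ i = v $ j / T" if "i \<in> K - {j}" for i
    using ideal_center_graph_eigenvector_clique_nth[OF G eig \<open>\<mu> \<noteq> -1\<close> that] TS
    unfolding T_def by (simp add: field_simps)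
  have entry_K': "v $ i = v $ j / S" if "i \<in> K' - {j}" for i
    using ideal_center_graph_eigenvector_clique_nth[OF first_kind_ideal_center_graph_sym[OF G]
        eig \<open>\<mu> \<noteq> -1\<close> that] TS
    unfolding S_def by (simp add: field_simps)
  have vertex_cases: "i = j \<or> i \<in> K - {j} \<or> i \<in> K' - {j}" for i
    using G unfolding first_kind_ideal_center_graph_def by blast
  have "v $ j \<noteq> 0"
  proof
    assume "v $ j = 0"
    then have "v $ i = 0" for i
      using vertex_cases[of i] entry_K entry_K' by auto
    with \<open>v \<noteq> 0\<close> show False
      by (simp add: vec_eq_iff)
  qed
  then have vj2: "0 < v $ j * v $ j"
    using not_real_square_gt_zero by blast
  have "k \<in> K' - {j}"
    using G k unfolding first_kind_ideal_center_graph_def by blast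
  then have "v $ k * v $ j = v $ j * v $ j / S"
    using entry_K' by simp
  also have "\<dots> < v $ l * v $ j"
  proof (cases "l = j")
    case True
    with vj2 TS show ?thesis
      by (simp add: divide_less_eq mult_less_cancel_left1)
  next
    case False
    with entry_K l vj2 TS show ?thesis
      by (simp add: divide_strict_left_mono)
  qed
  finally show ?thesis .
qed

theorem theorem1:
  fixes E :: "'n::finite \<Rightarrow> 'n \<Rightarrow> bool"
    and j l k :: 'n and K K' :: "'n set" and m1 m2 :: nat
    and lam1 :: real and v :: "real^'n"
  assumes G: "first_kind_ideal_center_graph E j K K'"
    and cK: "card K = m1" and cK': "card K' = m2"
    and m: "m1 > m2" "m2 \<ge> 2"
    and ev: "is_eigenvalue (adj_matrix E) lam1"
    and largest: "\<forall>\<mu>. is_eigenvalue (adj_matrix E) \<mu> \<longrightarrow> \<mu> \<le> lam1"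
    and vec: "adj_matrix E *v v = lam1 *\<^sub>R v" and unit: "norm v = 1"
    and l: "l \<in> K" and k: "k \<notin> K"
  shows "v $ l * v $ j > v $ k * v $ j"
proof -
  have card: "card K' < card K"
    using cK cK' m by simp
  obtain r where "r > real (card K) - 2" "is_eigenvalue (adj_matrix E) r"
    using ideal_center_graph_eigenvalue_gt[OF G card] by blast
  with largest have "lam1 > real (card K) - 2"
    by force
  moreover have "v \<noteq> 0"
    using unit by auto
  ultimately show ?thesis
    using ideal_center_graph_eigenvector_clique_dominates[OF G card vec] l k by blast
qed

end
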